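(* For every $l\ge1$, the Christoffel–Darboux kernel $K^{[l]}(x,y):=\sum_{k=0}^{l-1}Q^{(k)}(y)\bar Q^{(k)}(x)$ satisfies $$K^{[l]}(x,y)=\big(\xi_2^{[l]}(x)\big)^\top(g^{[l]})^{-1}\xi_1^{[l]}(y).$$
   Context: Setting: $\mu$ finite Borel measure on an interval, weights $w_{1,a}$ ($a\le p_1$), $w_{2,b}$ ($b\le p_2$), compositions $\vec n_\ell\in\mathbb N^{p_\ell}$; each $i\in\mathbb Z_+$ is uniquely $i=q|\vec n_\ell|+n_{\ell,1}+\dots+n_{\ell,a-1}+r$ ($0\le r<n_{\ell,a}$), $a_\ell(i)=a$, $k_\ell(i)=qn_{\ell,a}+r$. $\xi_\ell(x)$ is the semi-infinite vector with $i$-th entry $w_{\ell,a_\ell(i)}(x)x^{k_\ell(i)}$, $\xi_\ell^{[l]}$ its first $l$ entries. Moment matrix $g=\int\xi_1\xi_2^\top d\mu$, $g^{[l]}=(g_{i,j})_{0\le i,j<l}$, with Gauss–Borel factorization $g=S^{-1}\bar S$ ($S$ unit lower triangular, $\bar S$ upper triangular invertible). Linear forms $Q=S\xi_1$, $\bar Q=(\bar S^{-1})^\top\xi_2$ with entries $Q^{(k)},\bar Q^{(k)}$. *)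

theory Defs
  imports "HOL-Analysis.Analysis" "Jordan_Normal_Form.Gauss_Jordan_Elimination"
begin

text \<open>A composition is a list of positive naturals
  (entries n_1,...,n_p); components are indexed from 0 (so a = 0..p-1 here
  corresponds to a = 1..p in the paper). Writing i = q |n| + n_1+...+n_(a-1) + r
  with 0 <= r < n_a, we have comp_a n i = a (0-based) and comp_k n i = q n_a + r.\<close>

definition is_composition :: "nat list \<Rightarrow> bool" where
  "is_composition n \<longleftrightarrow> n \<noteq> [] \<and> (\<forall>m\<in>set n. 0 < m)"

definition comp_a :: "nat list \<Rightarrow> nat \<Rightarrow> nat" where
  "comp_a n i = (LEAST a. i mod sum_list n < sum_list (take (Suc a) n))"

definition comp_k :: "nat list \<Rightarrow> nat \<Rightarrow> nat" where
  "comp_k n i = (i div sum_list n) * (n ! comp_a n i)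
      + (i mod sum_list n - sum_list (take (comp_a n i) n))"

definition xi :: "nat list \<Rightarrow> (nat \<Rightarrow> real \<Rightarrow> real) \<Rightarrow> nat \<Rightarrow> real \<Rightarrow> real" where
  "xi n w i x = w (comp_a n i) x * x ^ comp_k n i"

definition moment :: "real measure \<Rightarrow> nat list \<Rightarrow> (nat \<Rightarrow> real \<Rightarrow> real)
    \<Rightarrow> nat list \<Rightarrow> (nat \<Rightarrow> real \<Rightarrow> real) \<Rightarrow> nat \<Rightarrow> nat \<Rightarrow> real" where
  "moment M n1 w1 n2 w2 i j = (\<integral>x. xi n1 w1 i x * xi n2 w2 j x \<partial>M)"

text \<open>Semi-infinite matrices are functions nat => nat => real.\<close>
definition lower_unitriangular :: "(nat \<Rightarrow> nat \<Rightarrow> real) \<Rightarrow> bool" where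
  "lower_unitriangular S \<longleftrightarrow> (\<forall>i. S i i = 1) \<and> (\<forall>i j. i < j \<longrightarrow> S i j = 0)"

definition upper_triangular_invertible :: "(nat \<Rightarrow> nat \<Rightarrow> real) \<Rightarrow> bool" where
  "upper_triangular_invertible U \<longleftrightarrow> (\<forall>i. U i i \<noteq> 0) \<and> (\<forall>i j. j < i \<longrightarrow> U i j = 0)"

text \<open>Gauss-Borel factorization g = S^{-1} Sb, expressed equivalently as S g = Sb
  (the product S g only involves finite sums since S is lower triangular).\<close>
definition gauss_borel :: "(nat \<Rightarrow> nat \<Rightarrow> real) \<Rightarrow> (nat \<Rightarrow> nat \<Rightarrow> real)
    \<Rightarrow> (nat \<Rightarrow> nat \<Rightarrow> real) \<Rightarrow> bool" where
  "gauss_borel g S Sb \<longleftrightarrow> lower_unitriangular S \<and> upper_triangular_invertible Sb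
     \<and> (\<forall>i j. (\<Sum>k\<le>i. S i k * g k j) = Sb i j)"

definition upper_tri_inverse :: "(nat \<Rightarrow> nat \<Rightarrow> real) \<Rightarrow> nat \<Rightarrow> nat \<Rightarrow> real" where
  "upper_tri_inverse U = (THE T. (\<forall>i j. j < i \<longrightarrow> T i j = 0) \<and>
      (\<forall>i j. i \<le> j \<longrightarrow> (\<Sum>k\<in>{i..j}. U i k * T k j) = (if i = j then 1 else 0)))"

definition Qform :: "(nat \<Rightarrow> nat \<Rightarrow> real) \<Rightarrow> (nat \<Rightarrow> real \<Rightarrow> real) \<Rightarrow> nat \<Rightarrow> real \<Rightarrow> real" where
  "Qform S \<xi> k x = (\<Sum>j\<le>k. S k j * \<xi> j x)"

definition Qbar_form :: "(nat \<Rightarrow> nat \<Rightarrow> real) \<Rightarrow> (nat \<Rightarrow> real \<Rightarrow> real) \<Rightarrow> nat \<Rightarrow> real \<Rightarrow> real" where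
  "Qbar_form Sb \<xi> k x = (\<Sum>j\<le>k. upper_tri_inverse Sb j k * \<xi> j x)"

definition CD_kernel :: "nat \<Rightarrow> (nat \<Rightarrow> real \<Rightarrow> real) \<Rightarrow> (nat \<Rightarrow> real \<Rightarrow> real) \<Rightarrow> real \<Rightarrow> real \<Rightarrow> real" where
  "CD_kernel l Q Qb x y = (\<Sum>k<l. Q k y * Qb k x)"

definition trunc_mat :: "nat \<Rightarrow> (nat \<Rightarrow> nat \<Rightarrow> real) \<Rightarrow> real mat" where
  "trunc_mat l g = mat l l (\<lambda>(i, j). g i j)"

definition trunc_vec :: "nat \<Rightarrow> (nat \<Rightarrow> real \<Rightarrow> real) \<Rightarrow> real \<Rightarrow> real Matrix.vec" where
  "trunc_vec l \<xi> x = Matrix.vec l (\<lambda>i. \<xi> i x)"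

end

theory Submission
  imports Defs "Jordan_Normal_Form.Determinant"
begin

text \<open>Since \<open>S\<close> is lower triangular, the factorisation \<open>S g = Sb\<close> survives truncation:
  \<open>S[l] g[l] = Sb[l]\<close>. As \<open>Sb\<close> is upper triangular, the truncation of its inverse
  \<open>T = Sb\<^sup>-\<^sup>1\<close> inverts \<open>Sb[l]\<close>, so \<open>g[l]\<^sup>-\<^sup>1 = T[l] S[l]\<close>. Finally
  \<open>\<xi>\<^sub>2[l](x)\<^sup>T T[l] S[l] \<xi>\<^sub>1[l](y)\<close> is the sum over \<open>k < l\<close> of \<open>(T[l]\<^sup>T \<xi>\<^sub>2[l](x))\<^sub>k (S[l] \<xi>\<^sub>1[l](y))\<^sub>k\<close>,
  and by triangularity these factors are \<open>Qbar\<^sup>(\<^sup>k\<^sup>)(x)\<close> and \<open>Q\<^sup>(\<^sup>k\<^sup>)(y)\<close>.\<close>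

lemma trunc_mat_carrier [simp]: "trunc_mat l A \<in> carrier_mat l l"
  by (simp add: trunc_mat_def)

lemma trunc_vec_carrier [simp]: "trunc_vec l \<xi> x \<in> carrier_vec l"
  by (simp add: trunc_vec_def)

lemma trunc_mat_mult_lower:
  fixes A B :: "nat \<Rightarrow> nat \<Rightarrow> real"
  assumes lower: "\<And>i k. i < k \<Longrightarrow> A i k = 0"
  shows "trunc_mat l A * trunc_mat l B = trunc_mat l (\<lambda>i j. \<Sum>k\<le>i. A i k * B k j)"
proof (rule eq_matI)
  fix i j assume "i < dim_row (trunc_mat l (\<lambda>i j. \<Sum>k\<le>i. A i k * B k j))"
    and "j < dim_col (trunc_mat l (\<lambda>i j. \<Sum>k\<le>i. A i k * B k j))"
  then have i: "i < l" and j: "j < l" by (auto simp: trunc_mat_def)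
  have "(\<Sum>k<l. A i k * B k j) = (\<Sum>k\<le>i. A i k * B k j)"
    by (rule sum.mono_neutral_right) (use i lower in auto)
  then show "(trunc_mat l A * trunc_mat l B) $$ (i, j)
      = trunc_mat l (\<lambda>i j. \<Sum>k\<le>i. A i k * B k j) $$ (i, j)"
    using i j by (simp add: trunc_mat_def scalar_prod_def lessThan_atLeast0)
qed (auto simp: trunc_mat_def)

lemma trunc_mat_mult_upper:
  fixes A B :: "nat \<Rightarrow> nat \<Rightarrow> real"
  assumes upper_A: "\<And>i k. k < i \<Longrightarrow> A i k = 0"
    and upper_B: "\<And>k j. j < k \<Longrightarrow> B k j = 0"
  shows "trunc_mat l A * trunc_mat l B = trunc_mat l (\<lambda>i j. \<Sum>k\<in>{i..j}. A i k * B k j)"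
proof (rule eq_matI)
  fix i j assume "i < dim_row (trunc_mat l (\<lambda>i j. \<Sum>k\<in>{i..j}. A i k * B k j))"
    and "j < dim_col (trunc_mat l (\<lambda>i j. \<Sum>k\<in>{i..j}. A i k * B k j))"
  then have i: "i < l" and j: "j < l" by (auto simp: trunc_mat_def)
  have "(\<Sum>k<l. A i k * B k j) = (\<Sum>k\<in>{i..j}. A i k * B k j)"
    by (rule sum.mono_neutral_right) (use j upper_A upper_B in fastforce)+
  then show "(trunc_mat l A * trunc_mat l B) $$ (i, j)
      = trunc_mat l (\<lambda>i j. \<Sum>k\<in>{i..j}. A i k * B k j) $$ (i, j)"
    using i j by (simp add: trunc_mat_def scalar_prod_def lessThan_atLeast0)
qed (auto simp: trunc_mat_def)

lemma mat_inverse_eq_Some_left_inverse: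
  fixes A B :: "'a :: field mat"
  assumes A: "A \<in> carrier_mat n n" and B: "B \<in> carrier_mat n n" and BA: "B * A = 1\<^sub>m n"
  shows "mat_inverse A = Some B"
proof -
  have "Determinant.det B * Determinant.det A = 1"
    using det_mult[OF B A] BA by simp
  then have "Determinant.det A \<noteq> 0" by (metis mult_zero_right zero_neq_one)
  then have "A \<in> Units (ring_mat TYPE('a) n ())"
    by (rule det_non_zero_imp_unit[OF A])
  then obtain X where X: "mat_inverse A = Some X"
    using mat_inverse(1)[OF A] by fastforce
  then have AX: "A * X = 1\<^sub>m n" and X_carrier: "X \<in> carrier_mat n n"
    using mat_inverse(2)[OF A] by auto
  have "X = (B * A) * X" using BA X_carrier by simp
  also have "\<dots> = B * (A * X)" using A B X_carrier by (simp add: assoc_mult_mat)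
  also have "\<dots> = B" using AX B by simp
  finally show ?thesis using X by simp
qed

lemma det_trunc_mat_upper_triangular_invertible:
  assumes "upper_triangular_invertible U"
  shows "Determinant.det (trunc_mat N U) \<noteq> 0"
proof -
  have "upper_triangular (trunc_mat N U)"
    using assms by (auto simp: upper_triangular_def upper_triangular_invertible_def trunc_mat_def)
  then have "Determinant.det (trunc_mat N U) = prod_list (diag_mat (trunc_mat N U))"
    by (rule det_upper_triangular[OF _ trunc_mat_carrier])
  then show ?thesis
    using assms by (auto simp: upper_triangular_invertible_def diag_mat_def trunc_mat_def
        prod_list_zero_iff)
qed

definition is_upper_tri_inverse :: "(nat \<Rightarrow> nat \<Rightarrow> real) \<Rightarrow> (nat \<Rightarrow> nat \<Rightarrow> real) \<Rightarrow> bool" where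
  "is_upper_tri_inverse U T \<longleftrightarrow> (\<forall>i j. j < i \<longrightarrow> T i j = 0) \<and>
      (\<forall>i j. i \<le> j \<longrightarrow> (\<Sum>k\<in>{i..j}. U i k * T k j) = (if i = j then 1 else 0))"

lemma is_upper_tri_inverse_trunc_mat:
  assumes "upper_triangular_invertible U" and "is_upper_tri_inverse U T"
  shows "trunc_mat N U * trunc_mat N T = 1\<^sub>m N"
proof -
  have "trunc_mat N U * trunc_mat N T = trunc_mat N (\<lambda>i j. \<Sum>k\<in>{i..j}. U i k * T k j)"
    using assms by (intro trunc_mat_mult_upper)
      (auto simp: upper_triangular_invertible_def is_upper_tri_inverse_def)
  also have "\<dots> = 1\<^sub>m N"
  proof -
    have "(\<Sum>k\<in>{i..j}. U i k * T k j) = (if i = j then 1 else 0)" for i j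
      using assms(2) by (cases "i \<le> j") (auto simp: is_upper_tri_inverse_def)
    then show ?thesis by (intro eq_matI) (simp_all add: trunc_mat_def)
  qed
  finally show ?thesis .
qed

text \<open>Column \<open>j\<close> of the inverse is read off the inverse of the \<open>(j+1) \<times> (j+1)\<close> truncation.\<close>

lemma is_upper_tri_inverse_exists:
  assumes U: "upper_triangular_invertible U"
  shows "\<exists>T. is_upper_tri_inverse U T"
proof -
  define C where "C j = the (mat_inverse (trunc_mat (Suc j) U))" for j
  have C: "trunc_mat (Suc j) U * C j = 1\<^sub>m (Suc j)" "C j \<in> carrier_mat (Suc j) (Suc j)" for j
  proof -
    have "trunc_mat (Suc j) U \<in> Units (ring_mat TYPE(real) (Suc j) ())"
      by (rule det_non_zero_imp_unit[OF trunc_mat_carrier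
            det_trunc_mat_upper_triangular_invertible[OF U]])
    then obtain X where "mat_inverse (trunc_mat (Suc j) U) = Some X"
      using mat_inverse(1)[of "trunc_mat (Suc j) U" "Suc j"] by fastforce
    then show "trunc_mat (Suc j) U * C j = 1\<^sub>m (Suc j)" "C j \<in> carrier_mat (Suc j) (Suc j)"
      using mat_inverse(2)[of "trunc_mat (Suc j) U" "Suc j"] by (auto simp: C_def)
  qed
  define T where "T i j = (if i \<le> j then C j $$ (i, j) else 0)" for i j
  have "(\<Sum>k\<in>{i..j}. U i k * T k j) = (if i = j then 1 else 0)" if ij: "i \<le> j" for i j
  proof -
    have "(\<Sum>k\<in>{i..j}. U i k * T k j) = (\<Sum>k<Suc j. U i k * C j $$ (k, j))"
      using U by (intro sum.mono_neutral_cong_left)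
        (auto simp: T_def upper_triangular_invertible_def)
    also have "\<dots> = (trunc_mat (Suc j) U * C j) $$ (i, j)"
      using C(2)[of j] ij by (simp add: trunc_mat_def scalar_prod_def lessThan_atLeast0)
    finally show ?thesis using C(1) ij by simp
  qed
  then have "is_upper_tri_inverse U T" by (auto simp: is_upper_tri_inverse_def T_def)
  then show ?thesis by blast
qed

lemma is_upper_tri_inverse_unique:
  assumes U: "upper_triangular_invertible U"
    and T1: "is_upper_tri_inverse U T1" and T2: "is_upper_tri_inverse U T2"
  shows "T1 = T2"
proof (intro ext)
  fix i j
  define N where "N = Suc (max i j)"
  have T1U: "trunc_mat N T1 * trunc_mat N U = 1\<^sub>m N"
    by (rule mat_mult_left_right_inverse[OF _ _ is_upper_tri_inverse_trunc_mat[OF U T1]]) simp_all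
  have "trunc_mat N T1 = trunc_mat N T1 * (trunc_mat N U * trunc_mat N T2)"
    by (simp add: is_upper_tri_inverse_trunc_mat[OF U T2] right_mult_one_mat[OF trunc_mat_carrier])
  also have "\<dots> = (trunc_mat N T1 * trunc_mat N U) * trunc_mat N T2"
    by (simp add: assoc_mult_mat[of _ N N _ N _ N])
  also have "\<dots> = trunc_mat N T2" by (simp add: T1U left_mult_one_mat[OF trunc_mat_carrier])
  finally have "trunc_mat N T1 $$ (i, j) = trunc_mat N T2 $$ (i, j)" by simp
  then show "T1 i j = T2 i j" by (simp add: trunc_mat_def N_def)
qed

lemma is_upper_tri_inverse_upper_tri_inverse:
  assumes "upper_triangular_invertible U"
  shows "is_upper_tri_inverse U (upper_tri_inverse U)"
proof -
  have "\<exists>!T. is_upper_tri_inverse U T"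
    using is_upper_tri_inverse_exists[OF assms] is_upper_tri_inverse_unique[OF assms] by blast
  then show ?thesis
    unfolding upper_tri_inverse_def is_upper_tri_inverse_def[symmetric] by (rule theI')
qed

lemma mat_inverse_trunc_mat_gauss_borel:
  assumes gb: "gauss_borel g S Sb"
  shows "mat_inverse (trunc_mat l g) = Some (trunc_mat l (upper_tri_inverse Sb) * trunc_mat l S)"
proof -
  let ?T = "trunc_mat l (upper_tri_inverse Sb)"
  have Sb: "upper_triangular_invertible Sb" using gb by (simp add: gauss_borel_def)
  have "trunc_mat l S * trunc_mat l g = trunc_mat l Sb"
    using gb by (subst trunc_mat_mult_lower)
      (auto simp: gauss_borel_def lower_unitriangular_def)
  moreover have "?T * trunc_mat l Sb = 1\<^sub>m l"
    by (rule mat_mult_left_right_inverse[OF _ _ is_upper_tri_inverse_trunc_mat])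
      (simp_all add: Sb is_upper_tri_inverse_upper_tri_inverse)
  ultimately have "(?T * trunc_mat l S) * trunc_mat l g = 1\<^sub>m l"
    by (simp add: assoc_mult_mat[of _ l l _ l _ l])
  then show ?thesis by (intro mat_inverse_eq_Some_left_inverse) (simp_all add: mult_carrier_mat[of _ l l _ l])
qed

lemma sum_triangular_trunc_mat_bilinear:
  fixes S T :: "nat \<Rightarrow> nat \<Rightarrow> real" and \<xi>\<^sub>1 \<xi>\<^sub>2 :: "nat \<Rightarrow> real \<Rightarrow> real"
  assumes lower_S: "\<And>i j. i < j \<Longrightarrow> S i j = 0" and upper_T: "\<And>i j. j < i \<Longrightarrow> T i j = 0"
  shows "(\<Sum>k<l. (\<Sum>j\<le>k. S k j * \<xi>\<^sub>1 j y) * (\<Sum>j\<le>k. T j k * \<xi>\<^sub>2 j x))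
    = trunc_vec l \<xi>\<^sub>2 x \<bullet> ((trunc_mat l T * trunc_mat l S) *\<^sub>v trunc_vec l \<xi>\<^sub>1 y)"
proof -
  define A where "A m = (\<Sum>j<l. S m j * \<xi>\<^sub>1 j y)" for m
  have "(\<Sum>k<l. (\<Sum>j\<le>k. S k j * \<xi>\<^sub>1 j y) * (\<Sum>j\<le>k. T j k * \<xi>\<^sub>2 j x))
      = (\<Sum>k<l. A k * (\<Sum>i<l. T i k * \<xi>\<^sub>2 i x))"
    unfolding A_def using lower_S upper_T
    by (intro sum.cong refl arg_cong2[where f = "(*)"] sum.mono_neutral_left) auto
  also have "\<dots> = (\<Sum>i<l. \<Sum>k<l. \<xi>\<^sub>2 i x * (T i k * A k))"
    by (subst sum.swap) (simp add: sum_distrib_left sum_distrib_right mult_ac)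
  also have "\<dots> = trunc_vec l \<xi>\<^sub>2 x \<bullet> (trunc_mat l T *\<^sub>v (trunc_mat l S *\<^sub>v trunc_vec l \<xi>\<^sub>1 y))"
    by (simp add: A_def trunc_vec_def trunc_mat_def scalar_prod_def lessThan_atLeast0
        sum_distrib_left)
  finally show ?thesis by (simp add: assoc_mult_mat_vec[of _ l l _ l])
qed

theorem corollary2p2:
  fixes M :: "real measure" and I :: "real set"
    and n1 n2 :: "nat list" and w1 w2 :: "nat \<Rightarrow> real \<Rightarrow> real"
    and S Sb :: "nat \<Rightarrow> nat \<Rightarrow> real" and l :: nat and x y :: real
  assumes "finite_measure M" and "sets M = sets borel"
    and "is_interval I" and "emeasure M (- I) = 0"
    and "is_composition n1" and "is_composition n2"
    and "\<And>i j. integrable M (\<lambda>t. xi n1 w1 i t * xi n2 w2 j t)"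
    and "gauss_borel (moment M n1 w1 n2 w2) S Sb"
    and "l \<ge> 1"
  shows "CD_kernel l (Qform S (xi n1 w1)) (Qbar_form Sb (xi n2 w2)) x y
       = trunc_vec l (xi n2 w2) x \<bullet>
           (the (mat_inverse (trunc_mat l (moment M n1 w1 n2 w2))) *\<^sub>v trunc_vec l (xi n1 w1) y)"
proof -
  have Sb: "upper_triangular_invertible Sb" and S: "lower_unitriangular S"
    using assms(8) by (auto simp: gauss_borel_def)
  have "\<And>i j. j < i \<Longrightarrow> upper_tri_inverse Sb i j = 0"
    using is_upper_tri_inverse_upper_tri_inverse[OF Sb] by (simp add: is_upper_tri_inverse_def)
  then show ?thesis
    unfolding mat_inverse_trunc_mat_gauss_borel[OF assms(8)] CD_kernel_def Qform_def Qbar_form_def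
    using S by (simp add: sum_triangular_trunc_mat_bilinear lower_unitriangular_def)
qed

end
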